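(* Let $V$ be the finite vertex set of a directed acyclic graph with positive weights $(d_v)_{v\in V}$, let $\alpha\in\mathbb{R}^n$ and let $K_w\in\mathbb{R}^{n\times n}$, $w\in V$, be positive semidefinite matrices. Let $L=\{\kappa\in\mathbb{R}^{V\times V}:\forall w\in V,\ \sum_{v\in{\rm A}(w)}\kappa_{vw}=1\}$. Then the optimization problems $$\min_{\kappa\in L}\ \max_{v\in V}\ d_v^{-2}\sum_{w\in{\rm D}(v)}\kappa_{vw}^2\,\alpha^\top K_w\alpha \qquad\text{and}\qquad \max_{\eta\in H}\ \sum_{w\in V}\zeta_w(\eta)\,\alpha^\top K_w\alpha$$ are dual to each other and there is no duality gap, i.e. their optimal values are equal.
   Context: ${\rm A}(w)$ and ${\rm D}(w)$ are the sets of ancestors and descendants of $w$ in the DAG, each including $w$ itself. $H=\{\eta\in\mathbb{R}^V:\eta\ge0,\ \sum_{v\in V}d_v^2\eta_v\le1\}$, and for $\eta\in H$, $\zeta_w(\eta)$ is defined by $\zeta_w(\eta)^{-1}=\sum_{v\in{\rm A}(w)}\eta_v^{-1}$, with the convention $\zeta_w(\eta)=0$ if $\eta_v=0$ for some $v\in{\rm A}(w)$. *)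

theory Defs
  imports "HOL-Analysis.Analysis"
begin

definition ancestors :: "'v set \<Rightarrow> ('v \<times> 'v) set \<Rightarrow> 'v \<Rightarrow> 'v set" where
  "ancestors V E w = {v \<in> V. (v, w) \<in> E\<^sup>*}"

definition descendants :: "'v set \<Rightarrow> ('v \<times> 'v) set \<Rightarrow> 'v \<Rightarrow> 'v set" where
  "descendants V E v = {w \<in> V. (v, w) \<in> E\<^sup>*}"

definition psd :: "real^'n^'n \<Rightarrow> bool" where
  "psd K \<longleftrightarrow> transpose K = K \<and> (\<forall>x. 0 \<le> x \<bullet> (K *v x))"

definition Lset :: "'v set \<Rightarrow> ('v \<times> 'v) set \<Rightarrow> ('v \<Rightarrow> 'v \<Rightarrow> real) set" where
  "Lset V E = {\<kappa>. (\<forall>v w. (v \<notin> V \<or> w \<notin> V) \<longrightarrow> \<kappa> v w = 0) \<and>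
                   (\<forall>w\<in>V. (\<Sum>v\<in>ancestors V E w. \<kappa> v w) = 1)}"

definition Hset :: "'v set \<Rightarrow> ('v \<Rightarrow> real) \<Rightarrow> ('v \<Rightarrow> real) set" where
  "Hset V d = {\<eta>. (\<forall>v. v \<notin> V \<longrightarrow> \<eta> v = 0) \<and> (\<forall>v\<in>V. 0 \<le> \<eta> v) \<and>
                  (\<Sum>v\<in>V. (d v)\<^sup>2 * \<eta> v) \<le> 1}"

definition zeta :: "'v set \<Rightarrow> ('v \<times> 'v) set \<Rightarrow> ('v \<Rightarrow> real) \<Rightarrow> 'v \<Rightarrow> real" where
  "zeta V E \<eta> w = (if \<exists>v\<in>ancestors V E w. \<eta> v = 0 then 0
                    else 1 / (\<Sum>v\<in>ancestors V E w. 1 / \<eta> v))"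

definition primal_obj :: "'v set \<Rightarrow> ('v \<times> 'v) set \<Rightarrow> ('v \<Rightarrow> real) \<Rightarrow> real^'n
    \<Rightarrow> ('v \<Rightarrow> real^'n^'n) \<Rightarrow> ('v \<Rightarrow> 'v \<Rightarrow> real) \<Rightarrow> real" where
  "primal_obj V E d \<alpha> K \<kappa> =
     Max ((\<lambda>v. 1 / (d v)\<^sup>2 * (\<Sum>w\<in>descendants V E v. (\<kappa> v w)\<^sup>2 * (\<alpha> \<bullet> (K w *v \<alpha>)))) ` V)"

definition dual_obj :: "'v set \<Rightarrow> ('v \<times> 'v) set \<Rightarrow> real^'n
    \<Rightarrow> ('v \<Rightarrow> real^'n^'n) \<Rightarrow> ('v \<Rightarrow> real) \<Rightarrow> real" where
  "dual_obj V E \<alpha> K \<eta> = (\<Sum>w\<in>V. zeta V E \<eta> w * (\<alpha> \<bullet> (K w *v \<alpha>)))"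

end

theory Submission
  imports Defs
begin

(*
  Weak duality is Cauchy-Schwarz in each column: for kappa in L,
  zeta_w(eta) <= sum over v in A(w) of eta_v kappa_vw^2, with equality when the column is
  balanced, i.e. eta_v kappa_vw does not depend on v.  Weighting by alpha' K_w alpha and
  exchanging the order of summation bounds the dual objective by the Lagrangian
  sum_v eta_v d_v^2 g_v(kappa), where g_v is the v-th term of the primal objective, and
  hence by max_v g_v(kappa).

  For the reverse inequality the maximum is replaced by the sum of the (q+1)-st powers of the
  g_v.  A minimiser of this smooth relaxation exists by compactness, and its first-order
  conditions say exactly that its columns are balanced for the weights
  eta_v ~ g_v^q / d_v^2.  The dual value at these weights is therefore
  sum g^(q+1) / sum g^q, which tends to the primal optimum as q grows; a limit point of the
  weights is a dual optimum.
*)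

definition vertex_cost :: "'v set \<Rightarrow> ('v \<times> 'v) set \<Rightarrow> ('v \<Rightarrow> real) \<Rightarrow> ('v \<Rightarrow> real)
    \<Rightarrow> ('v \<Rightarrow> 'v \<Rightarrow> real) \<Rightarrow> 'v \<Rightarrow> real" where
  "vertex_cost V E d c \<kappa> v = 1 / (d v)\<^sup>2 * (\<Sum>w\<in>descendants V E v. (\<kappa> v w)\<^sup>2 * c w)"

definition dual_value :: "'v set \<Rightarrow> ('v \<times> 'v) set \<Rightarrow> ('v \<Rightarrow> real) \<Rightarrow> ('v \<Rightarrow> real) \<Rightarrow> real" where
  "dual_value V E c \<eta> = (\<Sum>w\<in>V. zeta V E \<eta> w * c w)"

definition lagrangian :: "'v set \<Rightarrow> ('v \<times> 'v) set \<Rightarrow> ('v \<Rightarrow> real) \<Rightarrow> ('v \<Rightarrow> real)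
    \<Rightarrow> ('v \<Rightarrow> 'v \<Rightarrow> real) \<Rightarrow> ('v \<Rightarrow> real) \<Rightarrow> real" where
  "lagrangian V E d c \<kappa> \<eta> = (\<Sum>v\<in>V. \<eta> v * (d v)\<^sup>2 * vertex_cost V E d c \<kappa> v)"

lemma mem_ancestors_iff_mem_descendants:
  "v \<in> V \<Longrightarrow> w \<in> V \<Longrightarrow> v \<in> ancestors V E w \<longleftrightarrow> w \<in> descendants V E v"
  by (simp add: ancestors_def descendants_def)

lemma self_mem_ancestors: "w \<in> V \<Longrightarrow> w \<in> ancestors V E w"
  by (simp add: ancestors_def)

lemma ancestors_subset: "ancestors V E w \<subseteq> V"
  and descendants_subset: "descendants V E w \<subseteq> V"
  by (auto simp: ancestors_def descendants_def)

lemma finite_ancestors: "finite V \<Longrightarrow> finite (ancestors V E w)"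
  using ancestors_subset finite_subset by metis

lemma finite_descendants: "finite V \<Longrightarrow> finite (descendants V E w)"
  using descendants_subset finite_subset by metis

lemma vertex_cost_nonneg: "\<forall>w\<in>V. 0 \<le> c w \<Longrightarrow> 0 \<le> vertex_cost V E d c \<kappa> v"
  unfolding vertex_cost_def
  by (intro mult_nonneg_nonneg sum_nonneg) (use descendants_subset[of V E v] in auto)

lemma lagrangian_eq_sum_ancestors:
  assumes "finite V" "\<forall>v\<in>V. 0 < d v"
  shows "lagrangian V E d c \<kappa> \<eta> = (\<Sum>w\<in>V. c w * (\<Sum>v\<in>ancestors V E w. \<eta> v * (\<kappa> v w)\<^sup>2))"
proof -
  have "lagrangian V E d c \<kappa> \<eta> = (\<Sum>v\<in>V. \<Sum>w\<in>{w. w \<in> V \<and> (v, w) \<in> E\<^sup>*}. \<eta> v * (\<kappa> v w)\<^sup>2 * c w)"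
    unfolding lagrangian_def vertex_cost_def descendants_def using assms(2)
    by (intro sum.cong refl) (auto simp: sum_distrib_left field_simps)
  also have "\<dots> = (\<Sum>w\<in>V. \<Sum>v\<in>{v. v \<in> V \<and> (v, w) \<in> E\<^sup>*}. \<eta> v * (\<kappa> v w)\<^sup>2 * c w)"
    by (rule sum.swap_restrict[OF assms(1) assms(1)])
  finally show ?thesis
    by (simp add: ancestors_def sum_distrib_left mult.commute mult.left_commute)
qed

lemma harmonic_mean_le_weighted_sum_squares:
  fixes \<eta> k :: "'a \<Rightarrow> real"
  assumes A: "finite A" and \<eta>: "\<forall>v\<in>A. 0 < \<eta> v" and k: "(\<Sum>v\<in>A. k v) = 1"
  shows "1 / (\<Sum>v\<in>A. 1 / \<eta> v) \<le> (\<Sum>v\<in>A. \<eta> v * (k v)\<^sup>2)"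
proof -
  define S where "S = (\<Sum>v\<in>A. 1 / \<eta> v)"
  have "A \<noteq> {}" using k by auto
  then have "0 < S" unfolding S_def using A \<eta> by (intro sum_pos) auto
  define z where "z = 1 / S"
  have "0 \<le> (\<Sum>v\<in>A. \<eta> v * (k v - z / \<eta> v)\<^sup>2)"
    using \<eta> by (intro sum_nonneg) auto
  also have "\<dots> = (\<Sum>v\<in>A. \<eta> v * (k v)\<^sup>2) - 2 * z * (\<Sum>v\<in>A. k v) + z\<^sup>2 * S"
    unfolding S_def sum_distrib_left sum_subtractf[symmetric] sum.distrib[symmetric] using \<eta>
    by (intro sum.cong refl) (auto simp: field_simps power2_eq_square)
  also have "\<dots> = (\<Sum>v\<in>A. \<eta> v * (k v)\<^sup>2) - z"
    using \<open>0 < S\<close> by (simp add: k z_def power2_eq_square)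
  finally show ?thesis by (simp add: S_def z_def)
qed

lemma weighted_sum_squares_eq_if_balanced:
  fixes \<eta> k :: "'a \<Rightarrow> real"
  assumes "(\<Sum>v\<in>A. k v) = 1" and "\<forall>v\<in>A. \<eta> v * k v = r"
  shows "(\<Sum>v\<in>A. \<eta> v * (k v)\<^sup>2) = r"
proof -
  have "(\<Sum>v\<in>A. \<eta> v * (k v)\<^sup>2) = (\<Sum>v\<in>A. k v * r)"
    using assms(2) by (intro sum.cong refl) (auto simp: power2_eq_square)
  then show ?thesis by (simp add: sum_distrib_right[symmetric] assms(1))
qed

lemma zeta_nonneg:
  assumes "finite V" "\<forall>v\<in>V. 0 \<le> \<eta> v"
  shows "0 \<le> zeta V E \<eta> w"
  using assms ancestors_subset[of V E w] by (auto simp: zeta_def intro!: sum_nonneg)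

lemma zeta_le_weighted_sum_squares:
  assumes "finite V" "\<forall>v\<in>V. 0 \<le> \<eta> v" and k: "(\<Sum>v\<in>ancestors V E w. k v) = 1"
  shows "zeta V E \<eta> w \<le> (\<Sum>v\<in>ancestors V E w. \<eta> v * (k v)\<^sup>2)"
proof (cases "\<exists>v\<in>ancestors V E w. \<eta> v = 0")
  case True
  then show ?thesis using assms ancestors_subset[of V E w]
    by (auto simp: zeta_def intro!: sum_nonneg)
next
  case False
  then have "\<forall>v\<in>ancestors V E w. 0 < \<eta> v"
    using assms(2) ancestors_subset[of V E w] by (auto simp: less_le)
  from harmonic_mean_le_weighted_sum_squares[OF finite_ancestors[OF assms(1)] this k] False
  show ?thesis by (simp add: zeta_def)
qed

lemma zeta_eq_weighted_sum_squares:
  assumes "finite V" "\<forall>v\<in>V. 0 \<le> \<eta> v" and k: "(\<Sum>v\<in>ancestors V E w. k v) = 1"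
    and r: "\<forall>v\<in>ancestors V E w. \<eta> v * k v = r"
  shows "zeta V E \<eta> w = (\<Sum>v\<in>ancestors V E w. \<eta> v * (k v)\<^sup>2)"
proof -
  let ?A = "ancestors V E w"
  have sum_r: "(\<Sum>v\<in>?A. \<eta> v * (k v)\<^sup>2) = r"
    by (rule weighted_sum_squares_eq_if_balanced[OF k r])
  show ?thesis
  proof (cases "\<exists>v\<in>?A. \<eta> v = 0")
    case True
    then have "r = 0" using r by force
    with True show ?thesis by (simp add: zeta_def sum_r)
  next
    case False
    then have "(\<Sum>v\<in>?A. k v) = (\<Sum>v\<in>?A. r * (1 / \<eta> v))"
      using r by (intro sum.cong refl) (simp add: eq_divide_eq mult.commute)
    then have "r * (\<Sum>v\<in>?A. 1 / \<eta> v) = 1" by (simp add: k sum_distrib_left)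
    then have "1 / (\<Sum>v\<in>?A. 1 / \<eta> v) = r" by (metis divide_eq_eq mult.commute zero_neq_one mult_zero_right)
    with False show ?thesis by (simp add: zeta_def sum_r)
  qed
qed

lemma dual_value_le_lagrangian:
  assumes "finite V" "\<forall>v\<in>V. 0 < d v" "\<forall>w\<in>V. 0 \<le> c w"
    and \<kappa>: "\<kappa> \<in> Lset V E" and \<eta>: "\<eta> \<in> Hset V d"
  shows "dual_value V E c \<eta> \<le> lagrangian V E d c \<kappa> \<eta>"
  unfolding lagrangian_eq_sum_ancestors[OF assms(1,2)] dual_value_def
proof (intro sum_mono)
  fix w assume w: "w \<in> V"
  have "zeta V E \<eta> w \<le> (\<Sum>v\<in>ancestors V E w. \<eta> v * (\<kappa> v w)\<^sup>2)"
    using zeta_le_weighted_sum_squares[OF assms(1), where k="\<lambda>v. \<kappa> v w" and \<eta>=\<eta> and E=E and w=w] \<kappa> \<eta> w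
    by (auto simp: Lset_def Hset_def)
  then show "zeta V E \<eta> w * c w \<le> c w * (\<Sum>v\<in>ancestors V E w. \<eta> v * (\<kappa> v w)\<^sup>2)"
    using assms(3) w by (simp add: mult.commute mult_left_mono)
qed

lemma lagrangian_le_Max:
  assumes "finite V" "V \<noteq> {}" "\<forall>w\<in>V. 0 \<le> c w" and \<eta>: "\<eta> \<in> Hset V d"
  shows "lagrangian V E d c \<kappa> \<eta> \<le> Max (vertex_cost V E d c \<kappa> ` V)"
proof -
  let ?M = "Max (vertex_cost V E d c \<kappa> ` V)"
  have le_M: "vertex_cost V E d c \<kappa> v \<le> ?M" if "v \<in> V" for v
    using assms(1) that by (intro Max_ge) auto
  obtain v where "v \<in> V" using assms(2) by blast
  then have M0: "0 \<le> ?M" using le_M vertex_cost_nonneg[OF assms(3)] order_trans by blast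
  have "lagrangian V E d c \<kappa> \<eta> \<le> (\<Sum>v\<in>V. \<eta> v * (d v)\<^sup>2 * ?M)"
    unfolding lagrangian_def using \<eta> le_M by (intro sum_mono mult_left_mono) (auto simp: Hset_def)
  also have "\<dots> = ?M * (\<Sum>v\<in>V. (d v)\<^sup>2 * \<eta> v)"
    by (simp add: sum_distrib_left mult_ac)
  also have "\<dots> \<le> ?M" using \<eta> M0 mult_left_le by (auto simp: Hset_def)
  finally show ?thesis .
qed

lemma exists_balanced_column:
  fixes \<eta> :: "'a \<Rightarrow> real"
  assumes "finite A" "A \<noteq> {}" "\<forall>v\<in>A. 0 \<le> \<eta> v"
  shows "\<exists>k. (\<Sum>v\<in>A. k v) = 1 \<and> (\<exists>r. \<forall>v\<in>A. \<eta> v * k v = r)"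
proof (cases "\<exists>z\<in>A. \<eta> z = 0")
  case True
  then obtain z where z: "z \<in> A" "\<eta> z = 0" by blast
  show ?thesis
    by (intro exI[of _ "\<lambda>v. if v = z then 1 else 0"] conjI exI[of _ 0]) (use assms(1) z in simp_all)
next
  case False
  have pos: "0 < \<eta> v" if "v \<in> A" for v
    using assms(3) False that by (simp add: less_le)
  define S where "S = (\<Sum>v\<in>A. 1 / \<eta> v)"
  have "0 < S" unfolding S_def using assms(1,2) pos by (intro sum_pos) auto
  have "(\<Sum>v\<in>A. 1 / S * (1 / \<eta> v)) = 1 / S * S"
    unfolding S_def by (rule sum_distrib_left[symmetric])
  then show ?thesis
    by (intro exI[of _ "\<lambda>v. 1 / S * (1 / \<eta> v)"] conjI exI[of _ "1 / S"])
      (use \<open>0 < S\<close> pos in fastforce)+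
qed

text \<open>Together with \<open>dual_value_le_lagrangian\<close>: for fixed \<open>\<eta>\<close> the dual value is the minimum of the
  Lagrangian over \<open>L\<close>, attained column by column at balanced columns.\<close>
lemma exists_lagrangian_eq_dual_value:
  assumes fin: "finite V" and "\<forall>v\<in>V. 0 < d v" and \<eta>: "\<eta> \<in> Hset V d"
  shows "\<exists>\<kappa>\<in>Lset V E. lagrangian V E d c \<kappa> \<eta> = dual_value V E c \<eta>"
proof -
  have \<eta>0: "\<forall>v\<in>V. 0 \<le> \<eta> v" using \<eta> by (simp add: Hset_def)
  have "\<forall>w\<in>V. \<exists>k. (\<Sum>v\<in>ancestors V E w. k v) = 1 \<and> (\<exists>r. \<forall>v\<in>ancestors V E w. \<eta> v * k v = r)"
  proof
    fix w assume w: "w \<in> V"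
    show "\<exists>k. (\<Sum>v\<in>ancestors V E w. k v) = 1 \<and> (\<exists>r. \<forall>v\<in>ancestors V E w. \<eta> v * k v = r)"
      using self_mem_ancestors[OF w] ancestors_subset[of V E w] \<eta>0
      by (intro exists_balanced_column finite_ancestors[OF fin]) auto
  qed
  from bchoice[OF this] obtain k where k: "\<forall>w\<in>V. (\<Sum>v\<in>ancestors V E w. k w v) = 1 \<and>
      (\<exists>r. \<forall>v\<in>ancestors V E w. \<eta> v * k w v = r)" ..
  define \<kappa> where "\<kappa> v w = (if v \<in> V \<and> w \<in> V then k w v else 0)" for v w
  have col: "(\<Sum>v\<in>ancestors V E w. \<kappa> v w) = 1" if "w \<in> V" for w
  proof -
    have "(\<Sum>v\<in>ancestors V E w. \<kappa> v w) = (\<Sum>v\<in>ancestors V E w. k w v)"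
      using that ancestors_subset[of V E w] by (intro sum.cong refl) (auto simp: \<kappa>_def)
    then show ?thesis using k that by simp
  qed
  have "zeta V E \<eta> w = (\<Sum>v\<in>ancestors V E w. \<eta> v * (\<kappa> v w)\<^sup>2)" if w: "w \<in> V" for w
  proof -
    obtain r where r: "\<forall>v\<in>ancestors V E w. \<eta> v * k w v = r" using k w by blast
    have "\<forall>v\<in>ancestors V E w. \<eta> v * \<kappa> v w = r"
      using r ancestors_subset[of V E w] w by (auto simp: \<kappa>_def)
    then show ?thesis by (rule zeta_eq_weighted_sum_squares[OF fin \<eta>0 col[OF w]])
  qed
  then have "lagrangian V E d c \<kappa> \<eta> = dual_value V E c \<eta>"
    unfolding lagrangian_eq_sum_ancestors[OF fin assms(2)] dual_value_def by (simp add: mult.commute)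
  moreover have "\<kappa> \<in> Lset V E" using col by (auto simp: Lset_def \<kappa>_def)
  ultimately show ?thesis by blast
qed

lemma dual_value_eq_lagrangian_if_balanced:
  assumes fin: "finite V" and "\<forall>v\<in>V. 0 < d v" and \<kappa>: "\<kappa> \<in> Lset V E"
    and \<eta>0: "\<forall>v\<in>V. 0 \<le> \<eta> v"
    and balanced: "\<And>w. w \<in> V \<Longrightarrow> c w \<noteq> 0 \<Longrightarrow> \<exists>r. \<forall>v\<in>ancestors V E w. \<eta> v * \<kappa> v w = r"
  shows "dual_value V E c \<eta> = lagrangian V E d c \<kappa> \<eta>"
  unfolding lagrangian_eq_sum_ancestors[OF fin assms(2)] dual_value_def
proof (intro sum.cong refl)
  fix w assume w: "w \<in> V"
  show "zeta V E \<eta> w * c w = c w * (\<Sum>v\<in>ancestors V E w. \<eta> v * (\<kappa> v w)\<^sup>2)"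
  proof (cases "c w = 0")
    case False
    have "(\<Sum>v\<in>ancestors V E w. \<kappa> v w) = 1" using \<kappa> w by (simp add: Lset_def)
    with balanced[OF w False] show ?thesis
      using zeta_eq_weighted_sum_squares[OF fin \<eta>0] by (metis mult.commute)
  qed simp
qed

lemma finite_bounded_convergent_subseq:
  fixes X :: "nat \<Rightarrow> 'i \<Rightarrow> real"
  assumes "finite I" and "\<And>n i. i \<in> I \<Longrightarrow> \<bar>X n i\<bar> \<le> B"
  shows "\<exists>r. strict_mono r \<and> (\<forall>i\<in>I. convergent (\<lambda>n. X (r n) i))"
  using assms
proof (induction I rule: finite_induct)
  case empty
  show ?case by (intro exI[of _ id]) (simp add: strict_mono_def)
next
  case (insert a I)
  have "\<exists>r. strict_mono r \<and> (\<forall>i\<in>I. convergent (\<lambda>n. X (r n) i))"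
    by (rule insert.IH) (use insert.prems in auto)
  then obtain r where r: "strict_mono r" "\<forall>i\<in>I. convergent (\<lambda>n. X (r n) i)" by auto
  obtain s where s: "strict_mono s" "monoseq (\<lambda>n. X (r (s n)) a)"
    using seq_monosub[of "\<lambda>n. X (r n) a"] by (auto simp: o_def)
  have "Bseq (\<lambda>n. X (r (s n)) a)"
    by (rule BseqI'[where K=B]) (simp add: insert.prems)
  then have "convergent (\<lambda>n. X (r (s n)) a)"
    by (rule Bseq_monoseq_convergent[OF _ s(2)])
  moreover have "convergent (\<lambda>n. X (r (s n)) i)" if i: "i \<in> I" for i
  proof -
    obtain l where "(\<lambda>n. X (r n) i) \<longlonglongrightarrow> l" using r(2) i by (auto simp: convergent_def)
    from LIMSEQ_subseq_LIMSEQ[OF this s(1)] show ?thesis by (auto simp: convergent_def o_def)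
  qed
  ultimately show ?case
    using strict_mono_o[OF r(1) s(1)] by (intro exI[of _ "r \<circ> s"]) (auto simp: o_def)
qed

lemma Lset_nonempty:
  assumes fin: "finite V"
  shows "Lset V E \<noteq> {}"
proof -
  define \<kappa> :: "'a \<Rightarrow> 'a \<Rightarrow> real" where "\<kappa> v w = (if v \<in> V \<and> v = w then 1 else 0)" for v w
  have "(\<Sum>v\<in>ancestors V E w. \<kappa> v w) = 1" if w: "w \<in> V" for w
  proof -
    have "(\<Sum>v\<in>ancestors V E w. \<kappa> v w) = (\<Sum>v\<in>ancestors V E w. if v = w then 1 else 0)"
      using w by (intro sum.cong refl) (simp add: \<kappa>_def)
    then show ?thesis using self_mem_ancestors[OF w] finite_ancestors[OF fin] by simp
  qed
  then have "\<kappa> \<in> Lset V E" unfolding Lset_def \<kappa>_def by auto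
  then show ?thesis by blast
qed

text \<open>Replacing each column by its normalised absolute value stays in \<open>L\<close>, decreases every
  vertex cost and bounds all entries by \<open>1\<close>; this is what makes minimising sequences bounded.\<close>
lemma exists_bounded_Lset_le:
  assumes fin: "finite V" and c: "\<forall>w\<in>V. 0 \<le> c w" and \<kappa>: "\<kappa> \<in> Lset V E"
  shows "\<exists>\<kappa>'\<in>Lset V E. (\<forall>v w. \<bar>\<kappa>' v w\<bar> \<le> 1) \<and>
           (\<forall>v\<in>V. vertex_cost V E d c \<kappa>' v \<le> vertex_cost V E d c \<kappa> v)"
proof -
  define s where "s w = (\<Sum>u\<in>ancestors V E w. \<bar>\<kappa> u w\<bar>)" for w
  have s1: "1 \<le> s w" if "w \<in> V" for w
    using \<kappa> that sum_abs[of "\<lambda>u. \<kappa> u w" "ancestors V E w"] by (simp add: Lset_def s_def)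
  have le_s: "\<bar>\<kappa> v w\<bar> \<le> s w" if "v \<in> ancestors V E w" for v w
    unfolding s_def using that finite_ancestors[OF fin] by (intro member_le_sum) auto
  define \<kappa>' where "\<kappa>' v w = (if w \<in> V \<and> v \<in> ancestors V E w then \<bar>\<kappa> v w\<bar> / s w else 0)" for v w
  have le1: "\<bar>\<kappa>' v w\<bar> \<le> 1" for v w
    using le_s[of v w] s1[of w] by (auto simp: \<kappa>'_def)
  have le_\<kappa>: "\<bar>\<kappa>' v w\<bar> \<le> \<bar>\<kappa> v w\<bar>" for v w
    using s1[of w] by (auto simp: \<kappa>'_def divide_le_eq mult_le_cancel_left1)
  have "(\<Sum>v\<in>ancestors V E w. \<kappa>' v w) = 1" if w: "w \<in> V" for w
  proof -
    have "(\<Sum>v\<in>ancestors V E w. \<kappa>' v w) = (\<Sum>v\<in>ancestors V E w. \<bar>\<kappa> v w\<bar> / s w)"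
      using w by (intro sum.cong refl) (simp add: \<kappa>'_def)
    also have "\<dots> = s w / s w" unfolding s_def by (rule sum_divide_distrib[symmetric])
    finally show ?thesis using s1[OF w] by simp
  qed
  then have "\<kappa>' \<in> Lset V E" using ancestors_subset by (fastforce simp: Lset_def \<kappa>'_def)
  moreover have "vertex_cost V E d c \<kappa>' v \<le> vertex_cost V E d c \<kappa> v" for v
    unfolding vertex_cost_def using c descendants_subset[of V E v] le_\<kappa>
    by (intro mult_left_mono sum_mono mult_right_mono) (auto simp: abs_le_square_iff[symmetric])
  ultimately show ?thesis using le1 by blast
qed

lemma Lset_limit:
  assumes L: "\<And>n. K n \<in> Lset V E" and lim: "\<forall>v\<in>V. \<forall>w\<in>V. (\<lambda>n. K n v w) \<longlonglongrightarrow> \<kappa> v w"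
    and out: "\<forall>v w. v \<notin> V \<or> w \<notin> V \<longrightarrow> \<kappa> v w = 0"
  shows "\<kappa> \<in> Lset V E"
proof -
  have "(\<Sum>v\<in>ancestors V E w. \<kappa> v w) = 1" if w: "w \<in> V" for w
  proof (rule LIMSEQ_unique)
    show "(\<lambda>n. \<Sum>v\<in>ancestors V E w. K n v w) \<longlonglongrightarrow> (\<Sum>v\<in>ancestors V E w. \<kappa> v w)"
      using lim ancestors_subset[of V E w] w by (intro tendsto_sum) auto
    show "(\<lambda>n. \<Sum>v\<in>ancestors V E w. K n v w) \<longlonglongrightarrow> 1"
      using L w by (simp add: Lset_def)
  qed
  then show ?thesis using out by (simp add: Lset_def)
qed

lemma exists_minimizer:
  fixes \<Psi> :: "('v \<Rightarrow> real) \<Rightarrow> real"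
  assumes fin: "finite V" and c: "\<forall>w\<in>V. 0 \<le> c w"
    and mono: "\<And>x y. \<forall>v\<in>V. 0 \<le> x v \<and> x v \<le> y v \<Longrightarrow> \<Psi> x \<le> \<Psi> y"
    and lsc: "\<And>X x b m. \<forall>v\<in>V. (\<lambda>n. X n v) \<longlonglongrightarrow> x v \<Longrightarrow> \<forall>n. \<Psi> (X n) \<le> b n
                  \<Longrightarrow> b \<longlonglongrightarrow> m \<Longrightarrow> \<Psi> x \<le> m"
  shows "\<exists>\<kappa>0\<in>Lset V E. \<forall>\<kappa>\<in>Lset V E. \<Psi> (vertex_cost V E d c \<kappa>0) \<le> \<Psi> (vertex_cost V E d c \<kappa>)"
proof -
  let ?g = "vertex_cost V E d c"
  let ?S = "(\<lambda>\<kappa>. \<Psi> (?g \<kappa>)) ` Lset V E"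
  define m where "m = Inf ?S"
  have "?S \<noteq> {}" using Lset_nonempty[OF fin] by blast
  have "bdd_below ?S"
    using mono vertex_cost_nonneg[OF c] by (intro bdd_belowI[of _ "\<Psi> (\<lambda>_. 0)"]) auto
  have "\<exists>\<kappa>\<in>Lset V E. (\<forall>v w. \<bar>\<kappa> v w\<bar> \<le> 1) \<and> \<Psi> (?g \<kappa>) < m + inverse (real (Suc n))" for n
  proof -
    obtain \<kappa> where \<kappa>: "\<kappa> \<in> Lset V E" "\<Psi> (?g \<kappa>) < m + inverse (real (Suc n))"
      using cInf_lessD[OF \<open>?S \<noteq> {}\<close>, of "m + inverse (real (Suc n))"] by (auto simp: m_def)
    obtain \<kappa>' where \<kappa>': "\<kappa>' \<in> Lset V E" "\<forall>v w. \<bar>\<kappa>' v w\<bar> \<le> 1" "\<forall>v\<in>V. ?g \<kappa>' v \<le> ?g \<kappa> v"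
      using exists_bounded_Lset_le[OF fin c \<kappa>(1)] by blast
    have "\<Psi> (?g \<kappa>') \<le> \<Psi> (?g \<kappa>)"
      using \<kappa>'(3) vertex_cost_nonneg[OF c] by (intro mono) auto
    then show ?thesis using \<kappa> \<kappa>' by force
  qed
  then obtain K where K: "\<And>n. K n \<in> Lset V E" "\<And>n v w. \<bar>K n v w\<bar> \<le> 1"
      "\<And>n. \<Psi> (?g (K n)) < m + inverse (real (Suc n))"
    by metis
  obtain r where r: "strict_mono r" "\<forall>(v, w)\<in>V \<times> V. convergent (\<lambda>n. K (r n) v w)"
    using finite_bounded_convergent_subseq[of "V \<times> V" "\<lambda>n (v, w). K n v w" 1] fin K(2)
    by (auto simp: case_prod_beta)
  define \<kappa>0 where "\<kappa>0 v w = (if v \<in> V \<and> w \<in> V then lim (\<lambda>n. K (r n) v w) else 0)" for v w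
  have lim: "(\<lambda>n. K (r n) v w) \<longlonglongrightarrow> \<kappa>0 v w" if "v \<in> V" "w \<in> V" for v w
    using r(2) that by (auto simp: \<kappa>0_def convergent_LIMSEQ_iff)
  have "\<kappa>0 \<in> Lset V E"
    by (rule Lset_limit[of "\<lambda>n. K (r n)"]) (use K(1) lim in \<open>auto simp: \<kappa>0_def\<close>)
  moreover have "\<Psi> (?g \<kappa>0) \<le> m"
  proof (rule lsc)
    show "\<forall>v\<in>V. (\<lambda>n. ?g (K (r n)) v) \<longlonglongrightarrow> ?g \<kappa>0 v"
      unfolding vertex_cost_def using descendants_subset[of V E]
      by (intro ballI tendsto_intros lim) auto
    show "\<forall>n. \<Psi> (?g (K (r n))) \<le> m + inverse (real (Suc (r n)))"
      using K(3) less_imp_le by blast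
    have "(\<lambda>n. m + inverse (real (Suc n))) \<longlonglongrightarrow> m"
      using tendsto_add[OF tendsto_const LIMSEQ_inverse_real_of_nat, of m] by simp
    from LIMSEQ_subseq_LIMSEQ[OF this r(1)]
    show "(\<lambda>n. m + inverse (real (Suc (r n)))) \<longlonglongrightarrow> m" by (simp add: o_def)
  qed
  moreover have "m \<le> \<Psi> (?g \<kappa>)" if "\<kappa> \<in> Lset V E" for \<kappa>
    unfolding m_def using that \<open>bdd_below ?S\<close> by (intro cInf_lower) auto
  ultimately show ?thesis by (meson order_trans)
qed

lemma exists_minimizer_Max:
  assumes fin: "finite V" and ne: "V \<noteq> {}" and c: "\<forall>w\<in>V. 0 \<le> c w"
  shows "\<exists>\<kappa>0\<in>Lset V E. \<forall>\<kappa>\<in>Lset V E.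
           Max (vertex_cost V E d c \<kappa>0 ` V) \<le> Max (vertex_cost V E d c \<kappa> ` V)"
proof (rule exists_minimizer[OF fin c])
  fix x y :: "'a \<Rightarrow> real"
  assume "\<forall>v\<in>V. 0 \<le> x v \<and> x v \<le> y v"
  then have "x v \<le> Max (y ` V)" if "v \<in> V" for v
    using that fin by (meson Max_ge finite_imageI imageI order_trans)
  then show "Max (x ` V) \<le> Max (y ` V)"
    using fin ne by (simp add: Max_le_iff)
next
  fix X x and b :: "nat \<Rightarrow> real" and m
  assume lim: "\<forall>v\<in>V. (\<lambda>n. X n v) \<longlonglongrightarrow> x v" and le: "\<forall>n. Max (X n ` V) \<le> b n"
    and b: "b \<longlonglongrightarrow> m"
  have "x v \<le> m" if v: "v \<in> V" for v
  proof (rule LIMSEQ_le[of "\<lambda>n. X n v" _ b])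
    show "(\<lambda>n. X n v) \<longlonglongrightarrow> x v" using lim v by blast
    show "\<exists>N. \<forall>n\<ge>N. X n v \<le> b n" using le v fin ne by (auto simp: Max_le_iff)
  qed (rule b)
  then show "Max (x ` V) \<le> m" using fin ne by (simp add: Max_le_iff)
qed

lemma exists_minimizer_power_sum:
  assumes fin: "finite V" and c: "\<forall>w\<in>V. 0 \<le> c w"
  shows "\<exists>\<kappa>0\<in>Lset V E. \<forall>\<kappa>\<in>Lset V E.
           (\<Sum>v\<in>V. (vertex_cost V E d c \<kappa>0 v) ^ p) \<le> (\<Sum>v\<in>V. (vertex_cost V E d c \<kappa> v) ^ p)"
proof (rule exists_minimizer[OF fin c])
  fix x y :: "'a \<Rightarrow> real"
  assume "\<forall>v\<in>V. 0 \<le> x v \<and> x v \<le> y v"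
  then show "(\<Sum>v\<in>V. (x v) ^ p) \<le> (\<Sum>v\<in>V. (y v) ^ p)"
    by (intro sum_mono power_mono) auto
next
  fix X x and b :: "nat \<Rightarrow> real" and m
  assume lim: "\<forall>v\<in>V. (\<lambda>n. X n v) \<longlonglongrightarrow> x v" and le: "\<forall>n. (\<Sum>v\<in>V. (X n v) ^ p) \<le> b n"
    and b: "b \<longlonglongrightarrow> m"
  have "(\<lambda>n. \<Sum>v\<in>V. (X n v) ^ p) \<longlonglongrightarrow> (\<Sum>v\<in>V. (x v) ^ p)"
    using lim by (intro tendsto_sum tendsto_power) auto
  then show "(\<Sum>v\<in>V. (x v) ^ p) \<le> m"
    using b le by (intro LIMSEQ_le[of "\<lambda>n. \<Sum>v\<in>V. (X n v) ^ p" _ b]) auto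
qed

lemma sum_power_stationary:
  fixes a b e :: "'x \<Rightarrow> real"
  assumes min: "\<And>t. (\<Sum>x\<in>X. (a x) ^ Suc q) \<le> (\<Sum>x\<in>X. (a x + t * b x + t\<^sup>2 * e x) ^ Suc q)"
  shows "(\<Sum>x\<in>X. (a x) ^ q * b x) = 0"
proof -
  define f where "f t = (\<Sum>x\<in>X. (a x + t * b x + t\<^sup>2 * e x) ^ Suc q)" for t
  have "((\<lambda>t. a x + t * b x + t\<^sup>2 * e x) has_real_derivative b x) (at 0)" for x
    by (auto intro!: derivative_eq_intros)
  then have "(f has_real_derivative (\<Sum>x\<in>X. (1 + real q) * (b x * (a x + 0 * b x + 0\<^sup>2 * e x) ^ q))) (at 0)"
    unfolding f_def by (intro DERIV_sum DERIV_power_Suc)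
  moreover have "\<forall>t. \<bar>0 - t\<bar> < 1 \<longrightarrow> f 0 \<le> f t"
    using min by (simp add: f_def)
  ultimately have "(\<Sum>x\<in>X. (1 + real q) * (b x * (a x + 0 * b x + 0\<^sup>2 * e x) ^ q)) = 0"
    by (rule DERIV_local_min[OF _ zero_less_one])
  then have "(1 + real q) * (\<Sum>x\<in>X. (a x) ^ q * b x) = 0"
    by (simp add: sum_distrib_left mult.commute)
  then show ?thesis by simp
qed

lemma vertex_cost_add_scaled:
  "vertex_cost V E d c (\<lambda>a b. \<kappa> a b + t * \<delta> a b) x =
     vertex_cost V E d c \<kappa> x + t * (2 / (d x)\<^sup>2 * (\<Sum>w\<in>descendants V E x. \<kappa> x w * \<delta> x w * c w))
       + t\<^sup>2 * vertex_cost V E d c \<delta> x"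
proof -
  have "(\<kappa> x w + t * \<delta> x w)\<^sup>2 * c w
      = (\<kappa> x w)\<^sup>2 * c w + t * (2 * (\<kappa> x w * \<delta> x w * c w)) + t\<^sup>2 * ((\<delta> x w)\<^sup>2 * c w)" for w
    by (simp add: power2_eq_square algebra_simps)
  then show ?thesis
    by (simp add: vertex_cost_def sum.distrib sum_distrib_left sum_divide_distrib algebra_simps)
qed

text \<open>First-order condition at a minimiser of \<open>\<Sum>v. g v ^ Suc q\<close>, obtained by moving mass between
  two entries of one column of \<open>\<kappa>\<close>.\<close>
lemma minimizer_balanced:
  assumes fin: "finite V" and \<kappa>: "\<kappa> \<in> Lset V E"
    and min: "\<forall>\<kappa>'\<in>Lset V E. (\<Sum>x\<in>V. (vertex_cost V E d c \<kappa> x) ^ Suc q)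
                             \<le> (\<Sum>x\<in>V. (vertex_cost V E d c \<kappa>' x) ^ Suc q)"
    and w: "w \<in> V" and u: "u \<in> ancestors V E w" and v: "v \<in> ancestors V E w"
  shows "(vertex_cost V E d c \<kappa> v) ^ q * \<kappa> v w * c w / (d v)\<^sup>2
       = (vertex_cost V E d c \<kappa> u) ^ q * \<kappa> u w * c w / (d u)\<^sup>2"
proof (cases "u = v")
  case False
  let ?g = "vertex_cost V E d c"
  have uV: "u \<in> V" and vV: "v \<in> V" using u v ancestors_subset[of V E w] by auto
  define \<delta> :: "'a \<Rightarrow> 'a \<Rightarrow> real"
    where "\<delta> a b = (if b = w \<and> a = v then 1 else 0) - (if b = w \<and> a = u then 1 else 0)" for a b
  have shifted: "(\<lambda>a b. \<kappa> a b + t * \<delta> a b) \<in> Lset V E" for t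
  proof -
    have "(\<Sum>a\<in>ancestors V E w'. \<delta> a w') = 0" for w'
      using u v finite_ancestors[OF fin] by (cases "w' = w") (simp_all add: \<delta>_def sum_subtractf)
    then have "(\<Sum>a\<in>ancestors V E w'. \<kappa> a w' + t * \<delta> a w') = (\<Sum>a\<in>ancestors V E w'. \<kappa> a w')" for w'
      by (simp add: sum.distrib sum_distrib_left[symmetric])
    then show ?thesis using \<kappa> uV vV w by (auto simp: Lset_def \<delta>_def)
  qed
  define b where "b x = 2 / (d x)\<^sup>2 * (\<Sum>w'\<in>descendants V E x. \<kappa> x w' * \<delta> x w' * c w')" for x
  have "(\<Sum>x\<in>V. (?g \<kappa> x) ^ q * b x) = 0"
  proof (rule sum_power_stationary)
    fix t
    show "(\<Sum>x\<in>V. (?g \<kappa> x) ^ Suc q) \<le> (\<Sum>x\<in>V. (?g \<kappa> x + t * b x + t\<^sup>2 * ?g \<delta> x) ^ Suc q)"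
    proof -
      have "(\<Sum>x\<in>V. (?g \<kappa> x) ^ Suc q) \<le> (\<Sum>x\<in>V. (?g (\<lambda>a b. \<kappa> a b + t * \<delta> a b) x) ^ Suc q)"
        using min shifted[of t] by blast
      then show ?thesis by (simp only: vertex_cost_add_scaled b_def)
    qed
  qed
  moreover have "(?g \<kappa> x) ^ q * b x
      = (if x = v then 2 * ((?g \<kappa> v) ^ q * \<kappa> v w * c w / (d v)\<^sup>2) else 0)
      - (if x = u then 2 * ((?g \<kappa> u) ^ q * \<kappa> u w * c w / (d u)\<^sup>2) else 0)" for x
  proof -
    have "\<kappa> x w' * \<delta> x w' * c w'
        = (if w' = w then (if x = v then \<kappa> v w * c w else 0) - (if x = u then \<kappa> u w * c w else 0) else 0)"
      for w'
      by (simp add: \<delta>_def)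
    moreover have "w \<in> descendants V E v" "w \<in> descendants V E u"
      using mem_ancestors_iff_mem_descendants[OF vV w] mem_ancestors_iff_mem_descendants[OF uV w] u v
      by simp_all
    ultimately show ?thesis
      using False finite_descendants[OF fin, of E x] by (auto simp: b_def sum.delta')
  qed
  ultimately show ?thesis
    using uV vV fin False by (simp add: sum_subtractf sum.delta)
qed simp

lemma power_sum_ratio_ge:
  fixes G :: "'a \<Rightarrow> real"
  assumes fin: "finite V" and G0: "\<forall>v\<in>V. 0 \<le> G v" and \<theta>: "0 < \<theta>" "\<theta> < P"
    and S: "S = (\<Sum>v\<in>V. (G v) ^ q)" and P: "P ^ q \<le> S"
  shows "\<theta> - real (card V) * \<theta> * (\<theta> / P) ^ q \<le> (\<Sum>v\<in>V. (G v) ^ Suc q) / S"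
proof -
  have "0 < P" using \<theta> by simp
  then have "0 < S" using P by (meson less_le_trans zero_less_power)
  have each: "(G v) ^ q * \<theta> \<le> (G v) ^ Suc q + \<theta> ^ Suc q" if "v \<in> V" for v
  proof (cases "\<theta> \<le> G v")
    case True
    then have "(G v) ^ q * \<theta> \<le> (G v) ^ q * G v" using G0 that by (intro mult_left_mono) auto
    then have "(G v) ^ q * \<theta> \<le> (G v) ^ Suc q" by (simp add: mult.commute)
    then show ?thesis using \<theta> by (simp add: add_increasing2)
  next
    case False
    then have "(G v) ^ q * \<theta> \<le> \<theta> ^ Suc q"
      using G0 that \<theta> by (simp add: mult_right_mono power_mono)
    then show ?thesis using G0 that by (simp add: add_increasing)
  qed
  have "S * \<theta> = (\<Sum>v\<in>V. (G v) ^ q * \<theta>)" by (simp add: S sum_distrib_right)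
  also have "\<dots> \<le> (\<Sum>v\<in>V. (G v) ^ Suc q + \<theta> ^ Suc q)" by (intro sum_mono each)
  also have "\<dots> = (\<Sum>v\<in>V. (G v) ^ Suc q) + real (card V) * \<theta> ^ Suc q" by (simp add: sum.distrib)
  finally have "(S * \<theta> - real (card V) * \<theta> ^ Suc q) / S \<le> (\<Sum>v\<in>V. (G v) ^ Suc q) / S"
    using \<open>0 < S\<close> by (intro divide_right_mono) auto
  then have "\<theta> - real (card V) * \<theta> ^ Suc q / S \<le> (\<Sum>v\<in>V. (G v) ^ Suc q) / S"
    using \<open>0 < S\<close> by (simp add: diff_divide_distrib)
  moreover have "real (card V) * \<theta> ^ Suc q / S \<le> real (card V) * \<theta> ^ Suc q / P ^ q"
    using P \<theta> \<open>0 < P\<close> \<open>0 < S\<close> by (intro divide_left_mono) auto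
  moreover have "real (card V) * \<theta> ^ Suc q / P ^ q = real (card V) * \<theta> * (\<theta> / P) ^ q"
    by (simp add: power_divide)
  ultimately show ?thesis by linarith
qed

definition power_weights :: "'v set \<Rightarrow> ('v \<Rightarrow> real) \<Rightarrow> ('v \<Rightarrow> real) \<Rightarrow> nat \<Rightarrow> 'v \<Rightarrow> real" where
  "power_weights V d G q v =
     (if v \<in> V then (G v) ^ q / ((d v)\<^sup>2 * (\<Sum>u\<in>V. (G u) ^ q)) else 0)"

lemma power_weights_in_Hset:
  assumes "\<forall>v\<in>V. 0 < d v" "\<forall>v\<in>V. 0 \<le> G v" "0 < (\<Sum>u\<in>V. (G u) ^ q)"
  shows "power_weights V d G q \<in> Hset V d"
proof -
  let ?S = "\<Sum>u\<in>V. (G u) ^ q"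
  have "(\<Sum>v\<in>V. (d v)\<^sup>2 * power_weights V d G q v) = (\<Sum>v\<in>V. (G v) ^ q / ?S)"
  proof (rule sum.cong)
    fix v assume "v \<in> V"
    then have "0 < d v" using assms(1) by blast
    with \<open>v \<in> V\<close> show "(d v)\<^sup>2 * power_weights V d G q v = (G v) ^ q / ?S"
      by (simp add: power_weights_def)
  qed simp
  also have "\<dots> = 1" using assms(3) by (simp add: sum_divide_distrib[symmetric])
  finally show ?thesis
    using assms(2,3) by (simp add: Hset_def power_weights_def)
qed

text \<open>The first-order conditions of the \<open>\<ell>\<^sup>Suc q\<close> relaxation of the primal problem make the columns
  of its minimiser balanced for the power weights.\<close>
lemma dual_value_power_weights:
  assumes fin: "finite V" and dpos: "\<forall>v\<in>V. 0 < d v" and c: "\<forall>w\<in>V. 0 \<le> c w"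
    and \<kappa>: "\<kappa> \<in> Lset V E" and min: "\<forall>\<kappa>'\<in>Lset V E.
      (\<Sum>x\<in>V. (vertex_cost V E d c \<kappa> x) ^ Suc q) \<le> (\<Sum>x\<in>V. (vertex_cost V E d c \<kappa>' x) ^ Suc q)"
    and S: "S = (\<Sum>v\<in>V. (vertex_cost V E d c \<kappa> v) ^ q)" "0 < S"
  shows "dual_value V E c (power_weights V d (vertex_cost V E d c \<kappa>) q)
           = (\<Sum>v\<in>V. (vertex_cost V E d c \<kappa> v) ^ Suc q) / S"
proof -
  let ?G = "vertex_cost V E d c \<kappa>" and ?\<eta> = "power_weights V d (vertex_cost V E d c \<kappa>) q"
  have \<eta>: "?\<eta> v = (?G v) ^ q / (d v)\<^sup>2 / S" if "v \<in> V" for v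
    using that S(1) by (simp add: power_weights_def)
  have "dual_value V E c ?\<eta> = lagrangian V E d c \<kappa> ?\<eta>"
  proof (rule dual_value_eq_lagrangian_if_balanced[OF fin dpos \<kappa>])
    show "\<forall>v\<in>V. 0 \<le> ?\<eta> v" using \<eta> vertex_cost_nonneg[OF c] S(2) by simp
  next
    fix w assume w: "w \<in> V" and "c w \<noteq> 0"
    have "?\<eta> v * \<kappa> v w = ?\<eta> w * \<kappa> w w" if v: "v \<in> ancestors V E w" for v
    proof -
      have vV: "v \<in> V" using v ancestors_subset[of V E w] by auto
      have "c w * ((?G v) ^ q * \<kappa> v w / (d v)\<^sup>2) = c w * ((?G w) ^ q * \<kappa> w w / (d w)\<^sup>2)"
        using minimizer_balanced[OF fin \<kappa> min w self_mem_ancestors[OF w] v] by (simp add: algebra_simps)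
      then have "(?G v) ^ q * \<kappa> v w / (d v)\<^sup>2 = (?G w) ^ q * \<kappa> w w / (d w)\<^sup>2"
        by (rule mult_left_cancel[THEN iffD1, OF \<open>c w \<noteq> 0\<close>])
      then show ?thesis using \<eta>[OF vV] \<eta>[OF w] by (simp only: times_divide_eq_left)
    qed
    then show "\<exists>r. \<forall>v\<in>ancestors V E w. ?\<eta> v * \<kappa> v w = r" by blast
  qed
  also have "\<dots> = (\<Sum>v\<in>V. (?G v) ^ Suc q / S)"
    unfolding lagrangian_def
  proof (rule sum.cong)
    fix v assume v: "v \<in> V"
    then have "0 < d v" using dpos by blast
    then show "?\<eta> v * (d v)\<^sup>2 * ?G v = (?G v) ^ Suc q / S" using \<eta>[OF v] by (simp add: power_Suc2)
  qed simp
  finally show ?thesis by (simp add: sum_divide_distrib)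
qed

lemma exists_dual_value_approx:
  assumes fin: "finite V" and ne: "V \<noteq> {}" and dpos: "\<forall>v\<in>V. 0 < d v" and c: "\<forall>w\<in>V. 0 \<le> c w"
    and P: "0 < P" "\<forall>\<kappa>\<in>Lset V E. P \<le> Max (vertex_cost V E d c \<kappa> ` V)"
  shows "\<exists>\<eta>\<in>Hset V d. \<forall>\<theta>. 0 < \<theta> \<and> \<theta> < P \<longrightarrow>
           \<theta> - real (card V) * \<theta> * (\<theta> / P) ^ q \<le> dual_value V E c \<eta>"
proof -
  obtain \<kappa> where \<kappa>: "\<kappa> \<in> Lset V E" and min: "\<forall>\<kappa>'\<in>Lset V E.
      (\<Sum>x\<in>V. (vertex_cost V E d c \<kappa> x) ^ Suc q) \<le> (\<Sum>x\<in>V. (vertex_cost V E d c \<kappa>' x) ^ Suc q)"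
    using exists_minimizer_power_sum[OF fin c] by blast
  define G where "G = vertex_cost V E d c \<kappa>"
  define S where "S = (\<Sum>v\<in>V. (G v) ^ q)"
  have G0: "\<forall>v\<in>V. 0 \<le> G v" unfolding G_def using vertex_cost_nonneg[OF c] by blast
  have "P ^ q \<le> S"
  proof -
    have "Max (G ` V) \<in> G ` V" using fin ne by (intro Max_in) auto
    then obtain v where v: "v \<in> V" "Max (G ` V) = G v" by auto
    then have "P \<le> G v" using P(2) \<kappa> unfolding G_def by metis
    then have "P ^ q \<le> (G v) ^ q" using P(1) by (intro power_mono) auto
    also have "\<dots> \<le> S" unfolding S_def using fin v(1) G0 by (intro member_le_sum) auto
    finally show ?thesis .
  qed
  then have "0 < S" using P(1) by (meson less_le_trans zero_less_power)
  show ?thesis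
  proof (rule bexI)
    show "power_weights V d G q \<in> Hset V d"
      using power_weights_in_Hset[OF dpos G0] \<open>0 < S\<close> by (simp add: S_def)
    show "\<forall>\<theta>. 0 < \<theta> \<and> \<theta> < P \<longrightarrow> \<theta> - real (card V) * \<theta> * (\<theta> / P) ^ q \<le> dual_value V E c (power_weights V d G q)"
      using power_sum_ratio_ge[OF fin G0 _ _ S_def \<open>P ^ q \<le> S\<close>]
        dual_value_power_weights[OF fin dpos c \<kappa> min _ \<open>0 < S\<close>] by (simp add: G_def S_def)
  qed
qed

lemma Hset_abs_le:
  assumes "\<eta> \<in> Hset V d" "finite V" "\<forall>v\<in>V. 0 < d v"
  shows "\<bar>\<eta> v\<bar> \<le> (\<Sum>u\<in>V. 1 / (d u)\<^sup>2)"
proof (cases "v \<in> V")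
  case True
  have "(d v)\<^sup>2 * \<eta> v \<le> (\<Sum>u\<in>V. (d u)\<^sup>2 * \<eta> u)"
    using assms True by (intro member_le_sum) (auto simp: Hset_def)
  also have "\<dots> \<le> 1" using assms(1) by (simp add: Hset_def)
  finally have "(d v)\<^sup>2 * \<eta> v \<le> 1" .
  moreover have "0 < d v" using assms(3) True by blast
  ultimately have "\<eta> v \<le> 1 / (d v)\<^sup>2" by (simp add: le_divide_eq mult.commute)
  also have "\<dots> \<le> (\<Sum>u\<in>V. 1 / (d u)\<^sup>2)" using assms(2) True by (intro member_le_sum) auto
  finally show ?thesis using assms(1) True by (simp add: Hset_def)
next
  case False
  then show ?thesis using assms(1) by (simp add: Hset_def sum_nonneg)
qed

lemma Hset_limit:
  assumes H: "\<And>n. \<eta> n \<in> Hset V d" and lim: "\<forall>v\<in>V. (\<lambda>n. \<eta> n v) \<longlonglongrightarrow> \<eta>' v"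
    and out: "\<forall>v. v \<notin> V \<longrightarrow> \<eta>' v = 0"
  shows "\<eta>' \<in> Hset V d"
proof -
  have "0 \<le> \<eta>' v" if "v \<in> V" for v
    using lim H that by (intro LIMSEQ_le_const[of "\<lambda>n. \<eta> n v"]) (auto simp: Hset_def)
  moreover have "(\<lambda>n. \<Sum>v\<in>V. (d v)\<^sup>2 * \<eta> n v) \<longlonglongrightarrow> (\<Sum>v\<in>V. (d v)\<^sup>2 * \<eta>' v)"
    using lim by (intro tendsto_intros) auto
  then have "(\<Sum>v\<in>V. (d v)\<^sup>2 * \<eta>' v) \<le> 1"
    using H by (intro LIMSEQ_le_const2) (auto simp: Hset_def)
  ultimately show ?thesis using out by (simp add: Hset_def)
qed

lemma exists_dual_value_ge:
  assumes fin: "finite V" and ne: "V \<noteq> {}" and dpos: "\<forall>v\<in>V. 0 < d v" and c: "\<forall>w\<in>V. 0 \<le> c w"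
    and P: "\<forall>\<kappa>\<in>Lset V E. P \<le> Max (vertex_cost V E d c \<kappa> ` V)"
  shows "\<exists>\<eta>\<in>Hset V d. P \<le> dual_value V E c \<eta>"
proof (cases "0 < P")
  case False
  have "0 \<le> dual_value V E c (\<lambda>_. 0)"
    unfolding dual_value_def using c zeta_nonneg[OF fin] by (intro sum_nonneg mult_nonneg_nonneg) auto
  moreover have "(\<lambda>_. 0) \<in> Hset V d" by (simp add: Hset_def)
  ultimately show ?thesis using False by force
next
  case True
  have "\<forall>q. \<exists>\<eta>. \<eta> \<in> Hset V d \<and> (\<forall>\<theta>. 0 < \<theta> \<and> \<theta> < P \<longrightarrow>
           \<theta> - real (card V) * \<theta> * (\<theta> / P) ^ q \<le> dual_value V E c \<eta>)"
    using exists_dual_value_approx[OF fin ne dpos c True P] by blast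
  then obtain \<eta> where \<eta>H: "\<And>q. \<eta> q \<in> Hset V d" and approx: "\<And>q \<theta>. 0 < \<theta> \<Longrightarrow> \<theta> < P \<Longrightarrow>
           \<theta> - real (card V) * \<theta> * (\<theta> / P) ^ q \<le> dual_value V E c (\<eta> q)"
    by metis
  obtain r where r: "strict_mono r" "\<forall>v\<in>V. convergent (\<lambda>n. \<eta> (r n) v)"
    using finite_bounded_convergent_subseq[where I=V and X=\<eta> and B="\<Sum>u\<in>V. 1 / (d u)\<^sup>2"]
      fin Hset_abs_le[OF \<eta>H fin dpos] by blast
  define \<eta>' where "\<eta>' v = (if v \<in> V then lim (\<lambda>n. \<eta> (r n) v) else 0)" for v
  have lim: "\<forall>v\<in>V. (\<lambda>n. \<eta> (r n) v) \<longlonglongrightarrow> \<eta>' v"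
    using r(2) by (simp add: \<eta>'_def convergent_LIMSEQ_iff)
  have \<eta>'H: "\<eta>' \<in> Hset V d" by (rule Hset_limit[OF \<eta>H lim]) (simp add: \<eta>'_def)
  obtain \<kappa> where \<kappa>: "\<kappa> \<in> Lset V E" and \<kappa>_opt: "lagrangian V E d c \<kappa> \<eta>' = dual_value V E c \<eta>'"
    using exists_lagrangian_eq_dual_value[OF fin dpos \<eta>'H] by blast
  have "P \<le> lagrangian V E d c \<kappa> \<eta>'"
  proof (rule dense_le_bounded[OF True])
    fix \<theta> assume \<theta>: "0 < \<theta>" "\<theta> < P"
    have "(\<lambda>n. \<theta> - real (card V) * \<theta> * (\<theta> / P) ^ n) \<longlonglongrightarrow> \<theta> - real (card V) * \<theta> * 0"
      using \<theta> by (intro tendsto_intros LIMSEQ_power_zero) auto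
    from LIMSEQ_subseq_LIMSEQ[OF this r(1)]
    have "(\<lambda>n. \<theta> - real (card V) * \<theta> * (\<theta> / P) ^ r n) \<longlonglongrightarrow> \<theta>" by (simp add: o_def)
    moreover have "(\<lambda>n. lagrangian V E d c \<kappa> (\<eta> (r n))) \<longlonglongrightarrow> lagrangian V E d c \<kappa> \<eta>'"
      unfolding lagrangian_def using lim by (intro tendsto_intros) auto
    moreover have "\<theta> - real (card V) * \<theta> * (\<theta> / P) ^ r n \<le> lagrangian V E d c \<kappa> (\<eta> (r n))" for n
      using approx[OF \<theta>, of "r n"] dual_value_le_lagrangian[OF fin dpos c \<kappa> \<eta>H] by (rule order_trans)
    ultimately show "\<theta> \<le> lagrangian V E d c \<kappa> \<eta>'" by (intro LIMSEQ_le) auto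
  qed
  then show ?thesis using \<kappa>_opt \<eta>'H by auto
qed

theorem proposition7:
  fixes V :: "'v set" and E :: "('v \<times> 'v) set" and d :: "'v \<Rightarrow> real"
    and \<alpha> :: "real^'n" and K :: "'v \<Rightarrow> real^'n^'n"
  assumes "finite V" and "V \<noteq> {}"
    and "E \<subseteq> V \<times> V" and "acyclic E"
    and "\<forall>v\<in>V. 0 < d v"
    and "\<forall>w\<in>V. psd (K w)"
  shows "\<exists>\<kappa>0\<in>Lset V E. \<exists>\<eta>0\<in>Hset V d.
           (\<forall>\<kappa>\<in>Lset V E. primal_obj V E d \<alpha> K \<kappa>0 \<le> primal_obj V E d \<alpha> K \<kappa>) \<and>
           (\<forall>\<eta>\<in>Hset V d. dual_obj V E \<alpha> K \<eta> \<le> dual_obj V E \<alpha> K \<eta>0) \<and>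
           primal_obj V E d \<alpha> K \<kappa>0 = dual_obj V E \<alpha> K \<eta>0"
proof -
  note fin = assms(1) and ne = assms(2) and dpos = assms(5)
  define c where "c w = \<alpha> \<bullet> (K w *v \<alpha>)" for w
  have c: "\<forall>w\<in>V. 0 \<le> c w" using assms(6) by (simp add: c_def psd_def)
  have primal: "primal_obj V E d \<alpha> K \<kappa> = Max (vertex_cost V E d c \<kappa> ` V)" for \<kappa>
    by (simp add: primal_obj_def vertex_cost_def c_def)
  have dual: "dual_obj V E \<alpha> K \<eta> = dual_value V E c \<eta>" for \<eta>
    by (simp add: dual_obj_def dual_value_def c_def)
  obtain \<kappa>0 where \<kappa>0: "\<kappa>0 \<in> Lset V E"
    and opt: "\<forall>\<kappa>\<in>Lset V E. Max (vertex_cost V E d c \<kappa>0 ` V) \<le> Max (vertex_cost V E d c \<kappa> ` V)"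
    using exists_minimizer_Max[OF fin ne c] by blast
  obtain \<eta>0 where \<eta>0: "\<eta>0 \<in> Hset V d" "Max (vertex_cost V E d c \<kappa>0 ` V) \<le> dual_value V E c \<eta>0"
    using exists_dual_value_ge[OF fin ne dpos c opt] by blast
  have weak: "dual_value V E c \<eta> \<le> Max (vertex_cost V E d c \<kappa>0 ` V)" if "\<eta> \<in> Hset V d" for \<eta>
    using dual_value_le_lagrangian[OF fin dpos c \<kappa>0 that] lagrangian_le_Max[OF fin ne c that]
    by (rule order_trans)
  show ?thesis
    unfolding primal dual using \<kappa>0 \<eta>0 opt weak
    by (intro bexI[OF _ \<kappa>0] bexI[OF _ \<eta>0(1)] conjI ballI antisym) (auto intro: order_trans)
qed

end
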